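(* Let $\lambda^1,\dots,\lambda^N$ be loss functions such that each $\lambda^n$ is proper and $\eta^n$-mixable for some $\eta^n>0$. Consider the game: set $L_0^{(n)}:=0$, $L_0^n:=0$; at each step $t=1,2,\dots$, each Expert $n$ announces $\gamma_t^n\in[0,1]$, then Learner announces $\gamma_t\in[0,1]$, then Reality announces $\omega_t\in\{0,1\}$, and $L_t^{(n)}:=L_{t-1}^{(n)}+\lambda^n(\gamma_t,\omega_t)$, $L_t^n:=L_{t-1}^n+\lambda^n(\gamma_t^n,\omega_t)$ for $n=1,\dots,N$. Then Learner has a strategy guaranteeing, for all $T$ and all $n=1,\dots,N$, $$L_T^{(n)}\le L_T^n+\frac{\ln N}{\eta^n}.$$
   Context: A loss function is a map $\lambda:[0,1]\times\{0,1\}\to[0,\infty]$ satisfying: (1) $\lambda(\gamma,0)$ and $\lambda(\gamma,1)$ are continuous in $\gamma\in[0,1]$ (standard topology on $[0,\infty]$); (2) some $\gamma$ has $\lambda(\gamma,0),\lambda(\gamma,1)$ both finite; (3) no $\gamma$ has both infinite. Superprediction set: $\Sigma_\lambda=\{(x,y)\in[0,\infty)^2:\exists\gamma\ \lambda(\gamma,0)\le x,\ \lambda(\gamma,1)\le y\}$. For $\eta>0$, $\lambda$ is $\eta$-mixable if $\{(e^{-\eta x},e^{-\eta y}):(x,y)\in\Sigma_\lambda\}$ is convex. $\lambda$ is proper if $\pi\lambda(\pi,1)+(1-\pi)\lambda(\pi,0)\le\pi\lambda(\pi',1)+(1-\pi)\lambda(\pi',0)$ for all $\pi,\pi'\in[0,1]$.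 *)

theory Defs
  imports "HOL-Analysis.Analysis" "HOL-Library.Extended_Nonnegative_Real"
begin

text \<open>Outcomes: False stands for 0, True for 1. Losses take values in [0,\<infinity>] = ennreal.
  A loss function is given as a map on real \<times> bool, only its values on [0,1] matter.\<close>

definition loss_function :: "(real \<Rightarrow> bool \<Rightarrow> ennreal) \<Rightarrow> bool" where
  "loss_function lam \<longleftrightarrow>
     continuous_on {0..1} (\<lambda>g. lam g False) \<and>
     continuous_on {0..1} (\<lambda>g. lam g True) \<and>
     (\<exists>g\<in>{0..1}. lam g False < \<infinity> \<and> lam g True < \<infinity>) \<and>
     \<not> (\<exists>g\<in>{0..1}. lam g False = \<infinity> \<and> lam g True = \<infinity>)"

definition superpred :: "(real \<Rightarrow> bool \<Rightarrow> ennreal) \<Rightarrow> (real \<times> real) set" where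
  "superpred lam = {(x, y). 0 \<le> x \<and> 0 \<le> y \<and>
     (\<exists>g\<in>{0..1}. lam g False \<le> ennreal x \<and> lam g True \<le> ennreal y)}"

definition mixable :: "(real \<Rightarrow> bool \<Rightarrow> ennreal) \<Rightarrow> real \<Rightarrow> bool" where
  "mixable lam eta \<longleftrightarrow>
     convex ((\<lambda>(x, y). (exp (- eta * x), exp (- eta * y))) ` superpred lam)"

definition proper_loss :: "(real \<Rightarrow> bool \<Rightarrow> ennreal) \<Rightarrow> bool" where
  "proper_loss lam \<longleftrightarrow>
     (\<forall>p\<in>{0..1}. \<forall>p'\<in>{0..1}.
        ennreal p * lam p True + ennreal (1 - p) * lam p False
        \<le> ennreal p * lam p' True + ennreal (1 - p) * lam p' False)"

text \<open>A Learner strategy: S t g w is Learner's prediction at step t, where g s n is the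
  prediction of Expert n at step s and w s the outcome at step s.\<close>

definition learner_strategy :: "nat \<Rightarrow> (nat \<Rightarrow> (nat \<Rightarrow> nat \<Rightarrow> real) \<Rightarrow> (nat \<Rightarrow> bool) \<Rightarrow> real) \<Rightarrow> bool" where
  "learner_strategy N S \<longleftrightarrow>
     (\<forall>t g w. S t g w \<in> {0..1}) \<and>
     (\<forall>t g g' w w'. (\<forall>s\<in>{1..t}. \<forall>n\<in>{1..N}. g s n = g' s n) \<and> (\<forall>s\<in>{1..<t}. w s = w' s)
        \<longrightarrow> S t g w = S t g' w')"

end

theory Submission
  imports Defs
begin

text \<open>Write \<open>E\<^sub>n(x, \<omega>) = exp (- \<eta>\<^sub>n \<lambda>\<^sup>n(x, \<omega>))\<close>. Learner runs the Aggregating Algorithm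
  with a separate learning rate for each loss: it keeps weights
  \<open>w\<^sub>n = exp (\<eta>\<^sub>n (L\<^sup>(\<^sup>n\<^sup>) - L\<^sup>n))\<close>, initially 1, and predicts some \<open>\<gamma>\<close> with
  \<open>\<Sum>\<^sub>n w\<^sub>n E\<^sub>n(\<gamma>\<^sup>n, \<omega>) / E\<^sub>n(\<gamma>, \<omega>) \<le> \<Sum>\<^sub>n w\<^sub>n\<close> for both outcomes \<open>\<omega>\<close>. Then
  \<open>\<Sum>\<^sub>n w\<^sub>n \<le> N\<close> forever, and \<open>w\<^sub>n \<le> N\<close> is the claimed bound.

  Such a \<open>\<gamma>\<close> exists. For a proper \<open>\<eta>\<close>-mixable loss, properness and convexity of the
  exponentiated superprediction set give
  \<open>p E(q, 1) / E(p, 1) + (1 - p) E(q, 0) / E(p, 0) \<le> 1\<close> for all \<open>q\<close>, so at every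
  interior \<open>\<gamma>\<close> one of the two inequalities holds. Properness makes the one for \<open>\<omega> = 1\<close>
  hold at \<open>\<gamma> = 1\<close> and the one for \<open>\<omega> = 0\<close> at \<open>\<gamma> = 0\<close>; both define closed sets, so
  connectedness of \<open>[0, 1]\<close> yields a common point.\<close>

lemma DERIV_nonpos_if_right_max:
  fixes f :: "real \<Rightarrow> real"
  assumes "DERIV f x :> D" and "0 < e" and "\<And>h. 0 < h \<Longrightarrow> h \<le> e \<Longrightarrow> f (x + h) \<le> f x"
  shows "D \<le> 0"
proof (rule ccontr)
  assume "\<not> D \<le> 0"
  then obtain d where "d > 0" and "\<forall>h>0. h < d \<longrightarrow> f x < f (x + h)"
    using DERIV_pos_inc_right[OF assms(1)] by auto
  then have "f x < f (x + min (d/2) e)" using \<open>0 < e\<close> by simp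
  moreover have "f (x + min (d/2) e) \<le> f x" using assms(2) \<open>d > 0\<close> by (intro assms(3)) auto
  ultimately show False by simp
qed

lemma ratio_mix_le_one_if_log_mix_max:
  fixes a0 a1 b0 b1 p :: real
  assumes a: "a0 > 0" "a1 > 0"
    and max: "\<And>t. 0 < t \<Longrightarrow> t \<le> 1 \<Longrightarrow>
      p * ln ((1-t)*a1 + t*b1) + (1-p) * ln ((1-t)*a0 + t*b0) \<le> p * ln a1 + (1-p) * ln a0"
  shows "p * b1 / a1 + (1-p) * b0 / a0 \<le> 1"
proof -
  define f where "f t = p * ln ((1-t)*a1 + t*b1) + (1-p) * ln ((1-t)*a0 + t*b0)" for t
  have "DERIV f 0 :> p * (b1 - a1) / a1 + (1-p) * (b0 - a0) / a0"
    unfolding f_def using a by (auto intro!: derivative_eq_intros simp: field_simps)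
  then have "p * (b1 - a1) / a1 + (1-p) * (b0 - a0) / a0 \<le> 0"
    by (rule DERIV_nonpos_if_right_max[OF _ zero_less_one]) (use max in \<open>simp add: f_def\<close>)
  then show ?thesis using a by (simp add: field_simps)
qed

lemma interval_closed_cover_common_point:
  fixes f h :: "real \<Rightarrow> 'a::linorder_topology"
  assumes "continuous_on {a..b} f" "continuous_on {a..b} h" "a \<le> b"
    and "f b \<le> K" "h a \<le> K" and cover: "\<forall>x\<in>{a..b}. f x \<le> K \<or> h x \<le> K"
  shows "\<exists>x\<in>{a..b}. f x \<le> K \<and> h x \<le> K"
proof -
  define A where "A = {a..b} \<inter> f -` {..K}"
  define B where "B = {a..b} \<inter> h -` {..K}"
  have "closed A" "closed B"
    unfolding A_def B_def using assms(1,2) by (auto intro: continuous_closed_preimage)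
  moreover have "{a..b} \<subseteq> A \<union> B" "A \<inter> {a..b} \<noteq> {}" "B \<inter> {a..b} \<noteq> {}"
    using assms(3-5) cover by (auto simp: A_def B_def)
  ultimately have "A \<inter> B \<inter> {a..b} \<noteq> {}"
    using connected_Icc[of a b] unfolding connected_closed by blast
  then show ?thesis by (auto simp: A_def B_def)
qed

lemma ennreal_times_inverse: "0 \<le> x \<Longrightarrow> 0 < y \<Longrightarrow> ennreal x * inverse (ennreal y) = ennreal (x / y)"
  by (simp add: inverse_ennreal ennreal_mult[symmetric] divide_inverse)

definition exp_loss :: "real \<Rightarrow> ennreal \<Rightarrow> real" where
  "exp_loss eta x = (if x = \<infinity> then 0 else exp (- eta * enn2real x))"

lemma exp_loss_nonneg: "0 \<le> exp_loss eta x"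
  by (simp add: exp_loss_def)

lemma exp_loss_pos: "x \<noteq> \<infinity> \<Longrightarrow> 0 < exp_loss eta x"
  by (simp add: exp_loss_def)

lemma exp_loss_eq_0_iff: "exp_loss eta x = 0 \<longleftrightarrow> x = \<infinity>"
  by (simp add: exp_loss_def)

lemma exp_loss_ennreal: "0 \<le> x \<Longrightarrow> exp_loss eta (ennreal x) = exp (- eta * x)"
  by (simp add: exp_loss_def)

lemma exp_loss_zero [simp]: "exp_loss eta 0 = 1"
  by (simp add: exp_loss_def)

lemma exp_loss_add: "exp_loss eta (x + y) = exp_loss eta x * exp_loss eta y"
proof (cases "x = \<infinity> \<or> y = \<infinity>")
  case False
  then have "x + y \<noteq> \<infinity>" by (simp add: ennreal_add_eq_top)
  then show ?thesis using False
    by (simp add: exp_loss_def enn2real_plus less_top exp_add[symmetric] algebra_simps)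
qed (auto simp: exp_loss_def)

lemma exp_loss_sum: "finite I \<Longrightarrow> exp_loss eta (\<Sum>s\<in>I. x s) = (\<Prod>s\<in>I. exp_loss eta (x s))"
  by (induction I rule: finite_induct) (simp_all add: exp_loss_add)

lemma exp_loss_antimono:
  assumes "eta > 0" "x \<le> y" shows "exp_loss eta y \<le> exp_loss eta x"
proof (cases "y = \<infinity>")
  case False
  then have "x \<noteq> \<infinity>" using assms(2) by (auto simp: top_unique)
  moreover have "enn2real x \<le> enn2real y" using assms(2) False by (simp add: enn2real_mono less_top)
  ultimately show ?thesis using False assms(1) by (simp add: exp_loss_def)
qed (simp add: exp_loss_def)

lemma isCont_exp_loss_finite:
  assumes "x \<noteq> \<infinity>" shows "isCont (exp_loss eta) x"
proof -
  have tendsto: "((\<lambda>y. exp (- eta * enn2real y)) \<longlongrightarrow> exp_loss eta x) (at x)"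
    using assms by (auto simp: exp_loss_def ennreal_enn2real_if intro!: tendsto_intros tendsto_ident_at)
  have "\<forall>\<^sub>F y in at x. y < \<infinity>"
    using assms by (simp add: order_tendsto_iff[THEN iffD1, OF tendsto_ident_at] top.not_eq_extremum)
  then have "\<forall>\<^sub>F y in at x. exp (- eta * enn2real y) = exp_loss eta y"
    by eventually_elim (simp add: exp_loss_def)
  with tendsto show ?thesis
    unfolding isCont_def by (rule Lim_transform_eventually)
qed

lemma isCont_exp_loss_infinity:
  assumes "eta > 0" shows "isCont (exp_loss eta) \<infinity>"
  unfolding isCont_def
proof (rule tendstoI)
  fix e :: real assume "e > 0"
  define M where "M = max 0 (- ln e / eta)"
  have "exp (- eta * M) \<le> exp (ln e)"
    using assms by (simp add: M_def field_simps max_def)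
  then have M: "exp (- eta * M) \<le> e" using \<open>e > 0\<close> by simp
  have "\<forall>\<^sub>F y in at \<infinity>. ennreal M < y"
    by (simp add: order_tendsto_iff[THEN iffD1, OF tendsto_ident_at])
  then show "\<forall>\<^sub>F y in at \<infinity>. dist (exp_loss eta y) (exp_loss eta \<infinity>) < e"
  proof eventually_elim
    case (elim y)
    show ?case
    proof (cases "y = \<infinity>")
      case False
      then obtain s where s: "y = ennreal s" "s \<ge> 0" by (cases y) auto
      then have "M < s" using elim by (simp add: ennreal_less_iff M_def)
      then have "exp (- eta * s) < exp (- eta * M)" using assms by simp
      then have "exp (- eta * s) < e" using M by linarith
      then show ?thesis using s by (simp add: exp_loss_def)
    qed (simp add: \<open>e > 0\<close> exp_loss_def)
  qed
qed

lemma continuous_on_exp_loss: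
  assumes "eta > 0" shows "continuous_on A (exp_loss eta)"
proof (intro continuous_at_imp_continuous_on ballI)
  show "isCont (exp_loss eta) x" for x
    using assms isCont_exp_loss_finite isCont_exp_loss_infinity by (cases "x = \<infinity>") auto
qed

lemma le_add_ln_div_if_exp_loss_le:
  assumes "eta > 0" "c \<ge> 1" and le: "exp_loss eta x \<le> c * exp_loss eta y"
  shows "y \<le> x + ennreal (ln c / eta)"
proof (cases "x = \<infinity>")
  case False
  then have "exp_loss eta y \<noteq> 0" using le exp_loss_pos[of x eta] by auto
  then have "y \<noteq> \<infinity>" by (simp add: exp_loss_eq_0_iff)
  with False obtain x' y' where xy: "x = ennreal x'" "x' \<ge> 0" "y = ennreal y'" "y' \<ge> 0"
    by (cases x; cases y) auto
  have "exp (- eta * x') \<le> c * exp (- eta * y')" using le xy by (simp add: exp_loss_ennreal)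
  then have "ln (exp (- eta * x')) \<le> ln (c * exp (- eta * y'))"
    using assms(2) by (subst ln_le_cancel_iff) auto
  then have "y' \<le> x' + ln c / eta" using assms(1,2) by (simp add: ln_mult field_simps)
  then have "ennreal y' \<le> ennreal (x' + ln c / eta)" by (rule ennreal_leI)
  also have "\<dots> = ennreal x' + ennreal (ln c / eta)"
    using xy assms by (intro ennreal_plus) auto
  finally show ?thesis using xy by simp
qed simp

lemma loss_function_continuous_on:
  "loss_function lam \<Longrightarrow> continuous_on {0..1} (\<lambda>g. lam g b)"
  unfolding loss_function_def by (cases b) auto

lemma continuous_on_exp_loss_loss:
  "loss_function lam \<Longrightarrow> eta > 0 \<Longrightarrow> continuous_on {0..1} (\<lambda>g. exp_loss eta (lam g b))"
  by (rule continuous_on_compose2[OF continuous_on_exp_loss loss_function_continuous_on]) auto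

lemma proper_loss_le_at_of_bool:
  assumes "proper_loss lam" "q \<in> {0..1}"
  shows "lam (of_bool b) b \<le> lam q b"
proof -
  have "ennreal (of_bool b) * lam (of_bool b) True + ennreal (1 - of_bool b) * lam (of_bool b) False
      \<le> ennreal (of_bool b) * lam q True + ennreal (1 - of_bool b) * lam q False"
    using assms unfolding proper_loss_def by simp
  then show ?thesis by (cases b) simp_all
qed

lemma proper_loss_finite_at_of_bool:
  assumes "loss_function lam" "proper_loss lam"
  shows "lam (of_bool b) b \<noteq> \<infinity>"
proof -
  obtain g where "g \<in> {0..1}" "lam g False < \<infinity>" "lam g True < \<infinity>"
    using assms(1) unfolding loss_function_def by auto
  then show ?thesis
    using proper_loss_le_at_of_bool[OF assms(2), of g b] by (cases b) (auto simp: top_unique)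
qed

lemma proper_loss_finite_interior:
  assumes "loss_function lam" "proper_loss lam" "0 < p" "p < 1"
  shows "lam p b \<noteq> \<infinity>"
proof -
  obtain g where g: "g \<in> {0..1}" "lam g False < \<infinity>" "lam g True < \<infinity>"
    using assms(1) unfolding loss_function_def by auto
  have "ennreal p * lam p True + ennreal (1 - p) * lam p False
      \<le> ennreal p * lam g True + ennreal (1 - p) * lam g False"
    using assms(2-4) g(1) unfolding proper_loss_def by auto
  also have "\<dots> < \<infinity>" using g by (simp add: ennreal_mult_less_top)
  finally show ?thesis using assms(3,4) by (cases b) (auto simp: ennreal_mult_eq_top_iff)
qed

lemma loss_in_superpred:
  assumes "g \<in> {0..1}" "lam g False \<noteq> \<infinity>" "lam g True \<noteq> \<infinity>"
  shows "(enn2real (lam g False), enn2real (lam g True)) \<in> superpred lam"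
  using assms unfolding superpred_def by (auto simp: less_top)

lemma proper_loss_le_superpred:
  assumes "proper_loss lam" "p \<in> {0..1}" "(x, y) \<in> superpred lam"
  shows "ennreal p * lam p True + ennreal (1 - p) * lam p False \<le> ennreal (p * y + (1 - p) * x)"
proof -
  obtain g where g: "g \<in> {0..1}" "lam g False \<le> ennreal x" "lam g True \<le> ennreal y" "x \<ge> 0" "y \<ge> 0"
    using assms(3) unfolding superpred_def by auto
  have "ennreal p * lam p True + ennreal (1 - p) * lam p False
      \<le> ennreal p * lam g True + ennreal (1 - p) * lam g False"
    using assms(1,2) g(1) unfolding proper_loss_def by auto
  also have "\<dots> \<le> ennreal p * ennreal y + ennreal (1 - p) * ennreal x"
    using g by (intro add_mono mult_left_mono) auto
  also have "\<dots> = ennreal (p * y + (1 - p) * x)"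
    using assms(2) g by (simp add: ennreal_mult ennreal_plus)
  finally show ?thesis .
qed

text \<open>The point \<open>(E(p, 0), E(p, 1))\<close> maximises \<open>p ln y + (1 - p) ln x\<close> over the convex
  exponentiated superprediction set (this is properness), and the inequality is the first-order
  optimality condition in the direction of \<open>(E(q, 0), E(q, 1))\<close>.\<close>

lemma proper_mixable_exp_loss_ratio_interior:
  assumes LF: "loss_function lam" and PR: "proper_loss lam" and "eta > 0"
    and MX: "mixable lam eta" and p: "0 < p" "p < 1" and q: "0 < q" "q < 1"
  shows "p * exp_loss eta (lam q True) / exp_loss eta (lam p True)
       + (1 - p) * exp_loss eta (lam q False) / exp_loss eta (lam p False) \<le> 1"
proof -
  let ?E = "(\<lambda>(x, y). (exp (- eta * x), exp (- eta * y))) ` superpred lam"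
  define a where "a b = exp_loss eta (lam p b)" for b
  define c where "c b = exp_loss eta (lam q b)" for b
  have fin: "lam p b \<noteq> \<infinity>" "lam q b \<noteq> \<infinity>" for b
    using proper_loss_finite_interior[OF LF PR] p q by auto
  have in_E: "(exp_loss eta (lam g False), exp_loss eta (lam g True)) \<in> ?E"
    if "g \<in> {0..1}" "lam g False \<noteq> \<infinity>" "lam g True \<noteq> \<infinity>" for g
    using loss_in_superpred[of g lam] that by (force simp: exp_loss_def)
  have max: "p * ln ((1-t) * a True + t * c True) + (1-p) * ln ((1-t) * a False + t * c False)
      \<le> p * ln (a True) + (1-p) * ln (a False)" if t: "0 < t" "t \<le> 1" for t
  proof -
    have "(1-t) *\<^sub>R (a False, a True) + t *\<^sub>R (c False, c True) \<in> ?E"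
      using MX in_E[of p] in_E[of q] fin p q t
      unfolding mixable_def a_def c_def by (intro convexD) auto
    then obtain x y where xy: "(x, y) \<in> superpred lam"
      and x: "(1-t) * a False + t * c False = exp (- eta * x)"
      and y: "(1-t) * a True + t * c True = exp (- eta * y)"
      by auto
    have "ennreal (p * enn2real (lam p True) + (1 - p) * enn2real (lam p False))
        \<le> ennreal (p * y + (1 - p) * x)"
      using proper_loss_le_superpred[OF PR _ xy, of p] p fin
      by (simp add: ennreal_enn2real_if ennreal_mult ennreal_plus)
    moreover have "x \<ge> 0" "y \<ge> 0" using xy by (auto simp: superpred_def)
    ultimately have le: "p * enn2real (lam p True) + (1 - p) * enn2real (lam p False) \<le> p * y + (1 - p) * x"
      using p by (subst (asm) ennreal_le_iff) auto
    have "p * ln ((1-t) * a True + t * c True) + (1-p) * ln ((1-t) * a False + t * c False)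
        = - eta * (p * y + (1 - p) * x)"
      unfolding x y by (simp add: algebra_simps)
    also have "\<dots> \<le> - eta * (p * enn2real (lam p True) + (1 - p) * enn2real (lam p False))"
      using le \<open>eta > 0\<close> by simp
    also have "\<dots> = p * ln (a True) + (1-p) * ln (a False)"
      using fin by (simp add: a_def exp_loss_def algebra_simps)
    finally show ?thesis .
  qed
  have "a b > 0" for b using fin by (simp add: a_def exp_loss_pos)
  from ratio_mix_le_one_if_log_mix_max[OF this this max] show ?thesis
    by (simp add: a_def c_def)
qed

lemma proper_mixable_exp_loss_ratio:
  assumes LF: "loss_function lam" and PR: "proper_loss lam" and "eta > 0"
    and MX: "mixable lam eta" and p: "0 < p" "p < 1" and q: "q \<in> {0..1}"
  shows "p * exp_loss eta (lam q True) / exp_loss eta (lam p True)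
       + (1 - p) * exp_loss eta (lam q False) / exp_loss eta (lam p False) \<le> 1"
proof -
  have "continuous_on (closure {0<..<1}) (\<lambda>q. p * exp_loss eta (lam q True) / exp_loss eta (lam p True)
       + (1 - p) * exp_loss eta (lam q False) / exp_loss eta (lam p False))"
    using continuous_on_exp_loss_loss[OF LF \<open>eta > 0\<close>] proper_loss_finite_interior[OF LF PR p]
    by (auto intro!: continuous_intros simp: exp_loss_eq_0_iff)
  then show ?thesis
    by (rule continuous_le_on_closure)
       (use q proper_mixable_exp_loss_ratio_interior[OF assms(1-6)] in auto)
qed

type_synonym loss_family = "nat \<Rightarrow> real \<Rightarrow> bool \<Rightarrow> ennreal"

text \<open>The ratios live in \<open>[0, \<infinity>]\<close>: at an endpoint Learner's exponentiated loss may vanish,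
  and the ratio must then be \<open>\<infinity>\<close>, not the junk value of real division by zero.\<close>

definition ratio_sum :: "nat \<Rightarrow> loss_family \<Rightarrow> (nat \<Rightarrow> real) \<Rightarrow> (nat \<Rightarrow> real) \<Rightarrow> (nat \<Rightarrow> real)
    \<Rightarrow> real \<Rightarrow> bool \<Rightarrow> ennreal" where
  "ratio_sum N lam eta c q g b = (\<Sum>n\<in>{1..N}.
     ennreal (c n * exp_loss (eta n) (lam n (q n) b)) * inverse (ennreal (exp_loss (eta n) (lam n g b))))"

definition admissible :: "nat \<Rightarrow> loss_family \<Rightarrow> (nat \<Rightarrow> real) \<Rightarrow> (nat \<Rightarrow> real) \<Rightarrow> (nat \<Rightarrow> real)
    \<Rightarrow> real \<Rightarrow> bool" where
  "admissible N lam eta c q g \<longleftrightarrow>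
     g \<in> {0..1} \<and> (\<forall>b. ratio_sum N lam eta c q g b \<le> ennreal (\<Sum>n\<in>{1..N}. c n))"

definition proper_mixable_family :: "nat \<Rightarrow> loss_family \<Rightarrow> (nat \<Rightarrow> real) \<Rightarrow> bool" where
  "proper_mixable_family N lam eta \<longleftrightarrow>
     (\<forall>n\<in>{1..N}. loss_function (lam n) \<and> proper_loss (lam n) \<and> eta n > 0 \<and> mixable (lam n) (eta n))"

lemma ratio_sum_eq_ennreal:
  assumes "\<forall>n\<in>{1..N}. c n \<ge> 0"
    and "\<forall>n\<in>{1..N}. exp_loss (eta n) (lam n g b) = 0 \<longrightarrow> c n * exp_loss (eta n) (lam n (q n) b) = 0"
  shows "ratio_sum N lam eta c q g b
    = ennreal (\<Sum>n\<in>{1..N}. c n * exp_loss (eta n) (lam n (q n) b) / exp_loss (eta n) (lam n g b))"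
proof -
  have "ennreal (c n * exp_loss (eta n) (lam n (q n) b)) * inverse (ennreal (exp_loss (eta n) (lam n g b)))
      = ennreal (c n * exp_loss (eta n) (lam n (q n) b) / exp_loss (eta n) (lam n g b))" if "n \<in> {1..N}" for n
  proof (cases "exp_loss (eta n) (lam n g b) = 0")
    case False
    then have "exp_loss (eta n) (lam n g b) > 0" using exp_loss_nonneg by (simp add: less_le)
    then show ?thesis using assms(1) that by (simp add: ennreal_times_inverse exp_loss_nonneg)
  qed (use assms that in auto)
  then show ?thesis unfolding ratio_sum_def using assms(1)
    by (subst sum_ennreal[symmetric]) (auto intro!: sum.cong divide_nonneg_nonneg mult_nonneg_nonneg exp_loss_nonneg)
qed

lemma continuous_on_ratio_sum:
  assumes "proper_mixable_family N lam eta"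
  shows "continuous_on {0..1} (\<lambda>g. ratio_sum N lam eta c q g b)"
  unfolding ratio_sum_def
proof (intro continuous_on_sum ennreal_continuous_on_cmult continuous_on_inverse_ennreal continuous_on_ennreal)
  show "continuous_on {0..1} (\<lambda>g. exp_loss (eta n) (lam n g b))" if "n \<in> {1..N}" for n
    using assms that unfolding proper_mixable_family_def by (intro continuous_on_exp_loss_loss) auto
qed simp

lemma ratio_sum_at_of_bool_le:
  assumes H: "proper_mixable_family N lam eta" and c: "\<forall>n\<in>{1..N}. c n \<ge> 0" and q: "\<forall>n\<in>{1..N}. q n \<in> {0..1}"
  shows "ratio_sum N lam eta c q (of_bool b) b \<le> ennreal (\<Sum>n\<in>{1..N}. c n)"
proof -
  have "ratio_sum N lam eta c q (of_bool b) b \<le> (\<Sum>n\<in>{1..N}. ennreal (c n))"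
    unfolding ratio_sum_def
  proof (rule sum_mono)
    fix n assume n: "n \<in> {1..N}"
    let ?e = "\<lambda>g. exp_loss (eta n) (lam n g b)"
    have LF: "loss_function (lam n)" and PR: "proper_loss (lam n)" and "eta n > 0"
      using H n by (auto simp: proper_mixable_family_def)
    have pos: "?e (of_bool b) > 0"
      by (rule exp_loss_pos[OF proper_loss_finite_at_of_bool[OF LF PR]])
    have "?e (q n) \<le> ?e (of_bool b)"
      using exp_loss_antimono[OF \<open>eta n > 0\<close> proper_loss_le_at_of_bool[OF PR]] q n by auto
    then have "c n * ?e (q n) / ?e (of_bool b) \<le> c n"
      using pos c n by (simp add: divide_le_eq mult_left_mono)
    then show "ennreal (c n * ?e (q n)) * inverse (ennreal (?e (of_bool b))) \<le> ennreal (c n)"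
      using pos c n by (simp add: ennreal_times_inverse exp_loss_nonneg ennreal_leI)
  qed
  also have "\<dots> = ennreal (\<Sum>n\<in>{1..N}. c n)" using c by (intro sum_ennreal) auto
  finally show ?thesis .
qed

lemma ratio_sum_interior_le:
  assumes H: "proper_mixable_family N lam eta" and c: "\<forall>n\<in>{1..N}. c n \<ge> 0" and q: "\<forall>n\<in>{1..N}. q n \<in> {0..1}"
    and p: "0 < p" "p < 1"
  shows "\<exists>b. ratio_sum N lam eta c q p b \<le> ennreal (\<Sum>n\<in>{1..N}. c n)"
proof -
  let ?e = "\<lambda>n g b. exp_loss (eta n) (lam n g b)"
  define F where "F b = (\<Sum>n\<in>{1..N}. c n * ?e n (q n) b / ?e n p b)" for b
  have F: "ratio_sum N lam eta c q p b = ennreal (F b)" for b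
    unfolding F_def using c H p proper_loss_finite_interior
    by (intro ratio_sum_eq_ennreal) (auto simp: proper_mixable_family_def exp_loss_eq_0_iff)
  have "p * F True + (1-p) * F False
      = (\<Sum>n\<in>{1..N}. c n * (p * ?e n (q n) True / ?e n p True + (1-p) * ?e n (q n) False / ?e n p False))"
    unfolding F_def by (simp add: sum_distrib_left sum.distrib[symmetric] algebra_simps)
  also have "\<dots> \<le> (\<Sum>n\<in>{1..N}. c n * 1)"
    using c H q p by (intro sum_mono mult_left_mono proper_mixable_exp_loss_ratio) (auto simp: proper_mixable_family_def)
  finally have mix: "p * F True + (1-p) * F False \<le> (\<Sum>n\<in>{1..N}. c n)" by simp
  have "F True \<le> (\<Sum>n\<in>{1..N}. c n) \<or> F False \<le> (\<Sum>n\<in>{1..N}. c n)"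
  proof (rule ccontr)
    assume "\<not> ?thesis"
    then have "p * (\<Sum>n\<in>{1..N}. c n) < p * F True" "(1-p) * (\<Sum>n\<in>{1..N}. c n) < (1-p) * F False"
      using p by auto
    then show False using mix by (simp add: algebra_simps)
  qed
  then show ?thesis unfolding F by (auto intro: ennreal_leI)
qed

lemma admissible_exists:
  assumes "proper_mixable_family N lam eta" "\<forall>n\<in>{1..N}. c n \<ge> 0" "\<forall>n\<in>{1..N}. q n \<in> {0..1}"
  shows "\<exists>g. admissible N lam eta c q g"
proof -
  have "\<exists>g\<in>{0..1}. ratio_sum N lam eta c q g True \<le> ennreal (\<Sum>n\<in>{1..N}. c n)
                 \<and> ratio_sum N lam eta c q g False \<le> ennreal (\<Sum>n\<in>{1..N}. c n)"
  proof (rule interval_closed_cover_common_point)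
    show "ratio_sum N lam eta c q 1 True \<le> ennreal (\<Sum>n\<in>{1..N}. c n)"
      using ratio_sum_at_of_bool_le[OF assms, of True] by simp
    show "ratio_sum N lam eta c q 0 False \<le> ennreal (\<Sum>n\<in>{1..N}. c n)"
      using ratio_sum_at_of_bool_le[OF assms, of False] by simp
    show "\<forall>g\<in>{0..1}. ratio_sum N lam eta c q g True \<le> ennreal (\<Sum>n\<in>{1..N}. c n)
                    \<or> ratio_sum N lam eta c q g False \<le> ennreal (\<Sum>n\<in>{1..N}. c n)"
    proof
      fix g :: real assume "g \<in> {0..1}"
      then consider "g = 0" | "g = 1" | "0 < g" "g < 1" by fastforce
      then show "ratio_sum N lam eta c q g True \<le> ennreal (\<Sum>n\<in>{1..N}. c n)
                \<or> ratio_sum N lam eta c q g False \<le> ennreal (\<Sum>n\<in>{1..N}. c n)"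
      proof cases
        case 3
        then obtain b where "ratio_sum N lam eta c q g b \<le> ennreal (\<Sum>n\<in>{1..N}. c n)"
          using ratio_sum_interior_le[OF assms] by blast
        then show ?thesis by (cases b) auto
      qed (use ratio_sum_at_of_bool_le[OF assms, of False] ratio_sum_at_of_bool_le[OF assms, of True] in auto)
    qed
  qed (use continuous_on_ratio_sum[OF assms(1)] in auto)
  then show ?thesis unfolding admissible_def all_bool_eq by blast
qed

text \<open>The fallback \<open>0\<close> is never used on legal plays (\<open>admissible_exists\<close>); it only keeps
  the strategy in \<open>[0, 1]\<close> when experts announce predictions outside \<open>[0, 1]\<close>.\<close>

definition aa_prediction :: "nat \<Rightarrow> loss_family \<Rightarrow> (nat \<Rightarrow> real) \<Rightarrow> (nat \<Rightarrow> real) \<Rightarrow> (nat \<Rightarrow> real) \<Rightarrow> real" where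
  "aa_prediction N lam eta c q =
     (if \<exists>g. admissible N lam eta c q g then SOME g. admissible N lam eta c q g else 0)"

fun weights :: "nat \<Rightarrow> loss_family \<Rightarrow> (nat \<Rightarrow> real) \<Rightarrow> nat \<Rightarrow> (nat \<Rightarrow> nat \<Rightarrow> real) \<Rightarrow> (nat \<Rightarrow> bool)
    \<Rightarrow> nat \<Rightarrow> real" where
  "weights N lam eta 0 g w n = 1"
| "weights N lam eta (Suc t) g w n = weights N lam eta t g w n
     * exp_loss (eta n) (lam n (g (Suc t) n) (w (Suc t)))
     / exp_loss (eta n) (lam n (aa_prediction N lam eta (weights N lam eta t g w) (g (Suc t))) (w (Suc t)))"

definition aa_strategy :: "nat \<Rightarrow> loss_family \<Rightarrow> (nat \<Rightarrow> real) \<Rightarrow> nat \<Rightarrow> (nat \<Rightarrow> nat \<Rightarrow> real)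
    \<Rightarrow> (nat \<Rightarrow> bool) \<Rightarrow> real" where
  "aa_strategy N lam eta t g w = (if t = 0 then 0 else aa_prediction N lam eta (weights N lam eta (t - 1) g w) (g t))"

lemma aa_strategy_Suc:
  "aa_strategy N lam eta (Suc t) g w = aa_prediction N lam eta (weights N lam eta t g w) (g (Suc t))"
  by (simp add: aa_strategy_def)

lemma weights_Suc_aa_strategy:
  "weights N lam eta (Suc t) g w n = weights N lam eta t g w n
     * exp_loss (eta n) (lam n (g (Suc t) n) (w (Suc t)))
     / exp_loss (eta n) (lam n (aa_strategy N lam eta (Suc t) g w) (w (Suc t)))"
  by (simp add: aa_strategy_Suc)

declare weights.simps(2) [simp del]

lemma aa_prediction_admissible:
  "\<exists>g. admissible N lam eta c q g \<Longrightarrow> admissible N lam eta c q (aa_prediction N lam eta c q)"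
  unfolding aa_prediction_def by (simp add: someI_ex)

lemma aa_prediction_in_unit: "aa_prediction N lam eta c q \<in> {0..1}"
  using aa_prediction_admissible[of N lam eta c q]
  by (cases "\<exists>g. admissible N lam eta c q g") (auto simp: admissible_def aa_prediction_def)

lemma aa_prediction_cong:
  assumes "\<forall>n\<in>{1..N}. c n = c' n \<and> q n = q' n"
  shows "aa_prediction N lam eta c q = aa_prediction N lam eta c' q'"
proof -
  have "ratio_sum N lam eta c q = ratio_sum N lam eta c' q'"
    unfolding ratio_sum_def using assms by (intro ext sum.cong) auto
  moreover have "(\<Sum>n\<in>{1..N}. c n) = (\<Sum>n\<in>{1..N}. c' n)" using assms by (intro sum.cong) auto
  ultimately have "admissible N lam eta c q = admissible N lam eta c' q'"
    unfolding admissible_def by (intro ext) simp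
  then show ?thesis by (simp add: aa_prediction_def)
qed

lemma weights_cong:
  assumes "\<forall>s\<in>{1..t}. \<forall>n\<in>{1..N}. g s n = g' s n" "\<forall>s\<in>{1..t}. w s = w' s" "n \<in> {1..N}"
  shows "weights N lam eta t g w n = weights N lam eta t g' w' n"
  using assms
proof (induction t arbitrary: n)
  case (Suc t)
  then have "\<forall>n\<in>{1..N}. weights N lam eta t g w n = weights N lam eta t g' w' n" by auto
  then have "aa_prediction N lam eta (weights N lam eta t g w) (g (Suc t))
      = aa_prediction N lam eta (weights N lam eta t g' w') (g' (Suc t))"
    using Suc.prems by (intro aa_prediction_cong) auto
  then show ?case using Suc by (simp add: weights.simps(2))
qed simp

lemma learner_strategy_aa_strategy: "learner_strategy N (aa_strategy N lam eta)"
  unfolding learner_strategy_def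
proof (intro conjI allI impI)
  show "aa_strategy N lam eta t g w \<in> {0..1}" for t g w
    using aa_prediction_in_unit by (simp add: aa_strategy_def)
next
  fix t :: nat and g g' :: "nat \<Rightarrow> nat \<Rightarrow> real" and w w' :: "nat \<Rightarrow> bool"
  assume same: "(\<forall>s\<in>{1..t}. \<forall>n\<in>{1..N}. g s n = g' s n) \<and> (\<forall>s\<in>{1..<t}. w s = w' s)"
  show "aa_strategy N lam eta t g w = aa_strategy N lam eta t g' w'"
  proof (cases t)
    case (Suc k)
    then have "\<forall>n\<in>{1..N}. weights N lam eta k g w n = weights N lam eta k g' w' n"
      using same by (intro ballI weights_cong) auto
    then show ?thesis unfolding Suc aa_strategy_Suc using same Suc by (intro aa_prediction_cong) auto
  qed (simp add: aa_strategy_def)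
qed

lemma weights_nonneg: "weights N lam eta t g w n \<ge> 0"
  by (induction t) (simp_all add: weights.simps(2) exp_loss_nonneg)

lemma aa_strategy_admissible:
  assumes "proper_mixable_family N lam eta" "\<forall>s. \<forall>n\<in>{1..N}. g s n \<in> {0..1}"
  shows "admissible N lam eta (weights N lam eta t g w) (g (Suc t)) (aa_strategy N lam eta (Suc t) g w)"
  unfolding aa_strategy_Suc
  by (intro aa_prediction_admissible admissible_exists[OF assms(1)]) (use assms(2) weights_nonneg in auto)

lemma admissible_numerator_eq_0:
  assumes "admissible N lam eta c q g" "n \<in> {1..N}" "c n \<ge> 0" "exp_loss (eta n) (lam n g b) = 0"
  shows "c n * exp_loss (eta n) (lam n (q n) b) = 0"
proof -
  have "ennreal (c n * exp_loss (eta n) (lam n (q n) b)) * inverse (ennreal (exp_loss (eta n) (lam n g b)))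
      \<le> ratio_sum N lam eta c q g b"
    unfolding ratio_sum_def using assms(2) by (intro member_le_sum) auto
  also have "\<dots> \<le> ennreal (\<Sum>n\<in>{1..N}. c n)"
    using assms(1) unfolding admissible_def by blast
  also have "\<dots> < \<infinity>" by simp
  finally show ?thesis
    using assms(3,4) exp_loss_nonneg[of "eta n" "lam n (q n) b"] by (simp add: ennreal_mult_less_top)
qed

lemma weights_sum_le:
  assumes "proper_mixable_family N lam eta" "\<forall>s. \<forall>n\<in>{1..N}. g s n \<in> {0..1}"
  shows "(\<Sum>n\<in>{1..N}. weights N lam eta t g w n) \<le> real N"
proof (induction t)
  case (Suc t)
  let ?c = "weights N lam eta t g w"
  have adm: "admissible N lam eta ?c (g (Suc t)) (aa_strategy N lam eta (Suc t) g w)"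
    using aa_strategy_admissible[OF assms] .
  have "ennreal (\<Sum>n\<in>{1..N}. weights N lam eta (Suc t) g w n)
      = ratio_sum N lam eta ?c (g (Suc t)) (aa_strategy N lam eta (Suc t) g w) (w (Suc t))"
    unfolding weights_Suc_aa_strategy using admissible_numerator_eq_0[OF adm] weights_nonneg
    by (subst ratio_sum_eq_ennreal) auto
  also have "\<dots> \<le> ennreal (\<Sum>n\<in>{1..N}. ?c n)"
    using adm by (simp add: admissible_def)
  finally have "(\<Sum>n\<in>{1..N}. weights N lam eta (Suc t) g w n) \<le> (\<Sum>n\<in>{1..N}. ?c n)"
    using weights_nonneg by (subst (asm) ennreal_le_iff) (auto intro: sum_nonneg)
  then show ?case using Suc.IH by linarith
qed simp

lemma weights_mult_prod:
  assumes "proper_mixable_family N lam eta" "\<forall>s. \<forall>n\<in>{1..N}. g s n \<in> {0..1}" "n \<in> {1..N}"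
  shows "weights N lam eta t g w n * (\<Prod>s\<in>{1..t}. exp_loss (eta n) (lam n (aa_strategy N lam eta s g w) (w s)))
       = (\<Prod>s\<in>{1..t}. exp_loss (eta n) (lam n (g s n) (w s)))"
proof (induction t)
  case (Suc t)
  let ?learner = "exp_loss (eta n) (lam n (aa_strategy N lam eta (Suc t) g w) (w (Suc t)))"
  let ?expert = "exp_loss (eta n) (lam n (g (Suc t) n) (w (Suc t)))"
  let ?L = "\<Prod>s\<in>{1..t}. exp_loss (eta n) (lam n (aa_strategy N lam eta s g w) (w s))"
  let ?X = "\<Prod>s\<in>{1..t}. exp_loss (eta n) (lam n (g s n) (w s))"
  have "{1..Suc t} = insert (Suc t) {1..t}" by auto
  then have prods: "(\<Prod>s\<in>{1..Suc t}. exp_loss (eta n) (lam n (aa_strategy N lam eta s g w) (w s))) = ?learner * ?L"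
    "(\<Prod>s\<in>{1..Suc t}. exp_loss (eta n) (lam n (g s n) (w s))) = ?expert * ?X"
    by simp_all
  show ?case
  proof (cases "?learner = 0")
    case True
    have "?expert * ?X = (weights N lam eta t g w n * ?expert) * ?L"
      unfolding Suc.IH[symmetric] by (simp only: ac_simps)
    also have "weights N lam eta t g w n * ?expert = 0"
      using admissible_numerator_eq_0[OF aa_strategy_admissible[OF assms(1,2)] assms(3) weights_nonneg True] .
    finally have "?expert * ?X = 0" by simp
    then show ?thesis unfolding prods using True by simp
  next
    case False
    have "weights N lam eta (Suc t) g w n * (?learner * ?L) = ?expert * (weights N lam eta t g w n * ?L)"
      unfolding weights_Suc_aa_strategy using False by simp
    then show ?thesis unfolding prods Suc.IH .
  qed
qed simp

lemma exp_loss_expert_le: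
  assumes "proper_mixable_family N lam eta" "\<forall>s. \<forall>n\<in>{1..N}. g s n \<in> {0..1}" "n \<in> {1..N}"
  shows "exp_loss (eta n) (\<Sum>t\<in>{1..T}. lam n (g t n) (w t))
      \<le> real N * exp_loss (eta n) (\<Sum>t\<in>{1..T}. lam n (aa_strategy N lam eta t g w) (w t))"
proof -
  have "weights N lam eta T g w n \<le> (\<Sum>n\<in>{1..N}. weights N lam eta T g w n)"
    using assms(3) weights_nonneg by (intro member_le_sum) auto
  also have "\<dots> \<le> real N" by (rule weights_sum_le[OF assms(1,2)])
  finally have W: "weights N lam eta T g w n \<le> real N" .
  have "exp_loss (eta n) (\<Sum>t\<in>{1..T}. lam n (g t n) (w t))
      = weights N lam eta T g w n * (\<Prod>t\<in>{1..T}. exp_loss (eta n) (lam n (aa_strategy N lam eta t g w) (w t)))"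
    unfolding weights_mult_prod[OF assms] by (simp add: exp_loss_sum)
  also have "\<dots> \<le> real N * (\<Prod>t\<in>{1..T}. exp_loss (eta n) (lam n (aa_strategy N lam eta t g w) (w t)))"
    using W by (intro mult_right_mono prod_nonneg) (auto simp: exp_loss_nonneg)
  also have "\<dots> = real N * exp_loss (eta n) (\<Sum>t\<in>{1..T}. lam n (aa_strategy N lam eta t g w) (w t))"
    by (simp add: exp_loss_sum)
  finally show ?thesis .
qed

theorem corollary2:
  fixes N :: nat and lam :: "nat \<Rightarrow> real \<Rightarrow> bool \<Rightarrow> ennreal" and eta :: "nat \<Rightarrow> real"
  assumes "N \<ge> 1"
    and "\<forall>n\<in>{1..N}. loss_function (lam n) \<and> proper_loss (lam n) \<and> eta n > 0 \<and> mixable (lam n) (eta n)"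
  shows "\<exists>S. learner_strategy N S \<and>
     (\<forall>g w. (\<forall>s. \<forall>n\<in>{1..N}. g s n \<in> {0..1}) \<longrightarrow>
        (\<forall>T. \<forall>n\<in>{1..N}.
           (\<Sum>t\<in>{1..T}. lam n (S t g w) (w t))
           \<le> (\<Sum>t\<in>{1..T}. lam n (g t n) (w t)) + ennreal (ln (real N) / eta n)))"
proof (intro exI[of _ "aa_strategy N lam eta"] conjI allI impI ballI)
  have family: "proper_mixable_family N lam eta"
    using assms(2) unfolding proper_mixable_family_def .
  show "learner_strategy N (aa_strategy N lam eta)" by (rule learner_strategy_aa_strategy)
  fix g :: "nat \<Rightarrow> nat \<Rightarrow> real" and w :: "nat \<Rightarrow> bool" and T n :: nat
  assume experts: "\<forall>s. \<forall>n\<in>{1..N}. g s n \<in> {0..1}" and n: "n \<in> {1..N}"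
  have "eta n > 0" using family n by (simp add: proper_mixable_family_def)
  then show "(\<Sum>t\<in>{1..T}. lam n (aa_strategy N lam eta t g w) (w t))
      \<le> (\<Sum>t\<in>{1..T}. lam n (g t n) (w t)) + ennreal (ln (real N) / eta n)"
    using exp_loss_expert_le[OF family experts n] assms(1) by (intro le_add_ln_div_if_exp_loss_le) auto
qed

end
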